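(* Let $\Lambda\subseteq\mathbb{R}^d$ be a $d$-dimensional lattice, $F\colon K\to\mathbb{R}$ a $\Lambda$-periodic filter on a $\Lambda$-periodic cell complex $K$, and $\mathcal{M}=\mathcal{M}(F,\Lambda)$ its periodic merge tree with frequency function $\Phi$. If a point $B\in\mathcal{M}$ covers another point $A\in\mathcal{M}$, then $\Phi(B)\le\Phi(A)$.
   Context: A cell complex $K$ in $\mathbb{R}^d$ is a locally finite collection of cells (each homeomorphic to a closed ball, boundaries unions of lower-dimensional cells, intersections unions of shared faces). A lattice spanned by linearly independent vectors is the set of their integer combinations; $\mathrm{vol}_p$ is the $p$-volume of its unit cell $\{\sum c_iu_i: c_i\in[0,1)\}$ ($\mathrm{vol}_0(\{0\})=1$). $K$ is $\Lambda$-periodic if $\sigma+u\in K$ for $u\in\Lambda$; a filter $F$ satisfies $F(\sigma)\le F(\tau)$ for faces $\sigma$ of $\tau$ and is $\Lambda$-periodic if $F(\sigma+u)=F(\sigma)$; $K/\Lambda$ is the finite quotient complex on the torus $\mathbb{R}^d/\Lambda$, $F/\Lambda$ the quotient filter. The periodic merge tree $\mathcal{M}(F,\Lambda)$ is the merge tree of $F/\Lambda$: the quotient of $\{(x,s): x\in(K/\Lambda)_s\}$ ($(K/\Lambda)_s=(F/\Lambda)^{-1}(-\infty,s]$) by $(x,s)\sim(y,t)$ iff $s=t$ and $x,y$ are in the same connected component of $(K/\Lambda)_s$, with quotient topology and height $h$ (the $s$-coordinate); points are identified with components of sublevel sets, and $B$ covers $A$ if $h(A)\le h(B)$ and $A\subseteq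 B$. For a component $\Gamma$, with $\phi\colon\mathbb{R}^d\to\mathbb{R}^d/\Lambda$ the projection, a shadow is a component of $\phi^{-1}(\Gamma)$, the periodicity lattice is $\Lambda_\Gamma=\{u\in\Lambda:\gamma+u=\gamma\}$ for some (equivalently every) shadow $\gamma$, $p=\dim\Lambda_\Gamma$, and the frequency function is $\Phi(\Gamma)=\frac{\mathrm{vol}_p(\Lambda_\Gamma)}{\mathrm{vol}_d(\Lambda)}\nu_{d-p}R^{d-p}$ ($\nu_q$ the volume of the unit $q$-ball). Monomials are ordered by $tR^a<sR^b$ iff $a<b$, or $a=b$ and $t<s$; $\le$ allows equality. *)

theory Defs
  imports "HOL-Analysis.Analysis"
begin

definition int_span :: "'a::euclidean_space set \<Rightarrow> 'a set" where
  "int_span B = {(\<Sum>b\<in>B. of_int (c b) *\<^sub>R b) | c. True}"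

definition lattice_basis :: "'a::euclidean_space set \<Rightarrow> 'a set \<Rightarrow> bool" where
  "lattice_basis L B \<longleftrightarrow> finite B \<and> independent B \<and> L = int_span B"

definition full_lattice :: "'a::euclidean_space set \<Rightarrow> bool" where
  "full_lattice L \<longleftrightarrow> (\<exists>B. lattice_basis L B \<and> card B = DIM('a))"

definition gram_det :: "'a::euclidean_space set \<Rightarrow> real" where
  "gram_det B = (\<Sum>\<pi> | \<pi> permutes B. of_int (sign \<pi>) * (\<Prod>b\<in>B. b \<bullet> \<pi> b))"

text \<open>p-volume of the unit cell of a lattice (p = number of basis vectors),
  i.e. the p-volume of the parallelotope spanned by a basis; vol_0({0}) = 1.\<close>
definition lat_vol :: "'a::euclidean_space set \<Rightarrow> real" where
  "lat_vol L = sqrt (gram_det (SOME B. lattice_basis L B))"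

definition tproj :: "'a::euclidean_space set \<Rightarrow> 'a \<Rightarrow> 'a set" where
  "tproj L x = (\<lambda>u. x + u) ` L"

definition torus_top :: "'a::euclidean_space set \<Rightarrow> 'a set topology" where
  "torus_top L = topology (\<lambda>U. U \<subseteq> range (tproj L) \<and> open (tproj L -` U))"

lemma istopology_torus: "istopology (\<lambda>U. U \<subseteq> range (tproj L) \<and> open (tproj L -` U))"
  unfolding istopology_def by (auto simp: vimage_Union intro!: open_Union)

definition cell_bd :: "'a::euclidean_space set \<Rightarrow> nat \<Rightarrow> 'a set \<Rightarrow> bool" where
  "cell_bd s k D \<longleftrightarrow> (\<exists>(S::'a set) h g. subspace S \<and> dim S = k \<and>
      homeomorphism (cball 0 1 \<inter> S) s h g \<and> D = h ` (sphere 0 1 \<inter> S))"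

definition is_cell :: "'a::euclidean_space set \<Rightarrow> bool" where
  "is_cell s \<longleftrightarrow> (\<exists>k D. cell_bd s k D)"

definition cell_complex :: "'a::euclidean_space set set \<Rightarrow> bool" where
  "cell_complex K \<longleftrightarrow>
     (\<forall>s\<in>K. is_cell s) \<and>
     (\<forall>x. \<exists>e>0. finite {s\<in>K. s \<inter> ball x e \<noteq> {}}) \<and>
     (\<forall>s\<in>K. \<exists>k D. cell_bd s k D \<and>
         D = \<Union>{t\<in>K. t \<subseteq> D \<and> (\<exists>j D'. cell_bd t j D' \<and> j < k)}) \<and>
     (\<forall>s\<in>K. \<forall>t\<in>K. s \<inter> t = \<Union>{r\<in>K. r \<subseteq> s \<and> r \<subseteq> t})"

text \<open>Faces of a cell t of K are the cells of K contained in t.\<close>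
definition periodic_complex :: "'a::euclidean_space set set \<Rightarrow> 'a set \<Rightarrow> bool" where
  "periodic_complex K L \<longleftrightarrow> (\<forall>s\<in>K. \<forall>u\<in>L. (\<lambda>x. x + u) ` s \<in> K)"

definition monotone_filter :: "'a::euclidean_space set set \<Rightarrow> ('a set \<Rightarrow> real) \<Rightarrow> bool" where
  "monotone_filter K F \<longleftrightarrow> (\<forall>s\<in>K. \<forall>t\<in>K. s \<subseteq> t \<longrightarrow> F s \<le> F t)"

definition periodic_filter :: "'a::euclidean_space set set \<Rightarrow> ('a set \<Rightarrow> real) \<Rightarrow> 'a set \<Rightarrow> bool" where
  "periodic_filter K F L \<longleftrightarrow> (\<forall>s\<in>K. \<forall>u\<in>L. F ((\<lambda>x. x + u) ` s) = F s)"

definition quot_sublevel ::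
  "'a::euclidean_space set set \<Rightarrow> ('a set \<Rightarrow> real) \<Rightarrow> 'a set \<Rightarrow> real \<Rightarrow> 'a set set" where
  "quot_sublevel K F L r = tproj L ` \<Union>{s\<in>K. F s \<le> r}"

text \<open>Points of the merge tree: a component G of (K/L)_r together with its height r.\<close>
definition mt_point ::
  "'a::euclidean_space set set \<Rightarrow> ('a set \<Rightarrow> real) \<Rightarrow> 'a set \<Rightarrow> 'a set set \<times> real \<Rightarrow> bool" where
  "mt_point K F L P \<longleftrightarrow>
     fst P \<in> connected_components_of (subtopology (torus_top L) (quot_sublevel K F L (snd P)))"

definition covers :: "'a set set \<times> real \<Rightarrow> 'a set set \<times> real \<Rightarrow> bool" where
  "covers B A \<longleftrightarrow> snd A \<le> snd B \<and> fst A \<subseteq> fst B"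

definition shadows :: "'a::euclidean_space set \<Rightarrow> 'a set set \<Rightarrow> 'a set set" where
  "shadows L G = components (tproj L -` G)"

definition per_lattice :: "'a::euclidean_space set \<Rightarrow> 'a set set \<Rightarrow> 'a set" where
  "per_lattice L G = (let g = (SOME g. g \<in> shadows L G) in {u\<in>L. (\<lambda>x. x + u) ` g = g})"

text \<open>A monomial t R^a is represented by the pair (t, a).\<close>
definition frequency :: "'a::euclidean_space set \<Rightarrow> 'a set set \<Rightarrow> real \<times> nat" where
  "frequency L G = (let p = dim (per_lattice L G); q = DIM('a) - p in
     (lat_vol (per_lattice L G) / lat_vol L * unit_ball_vol (real q), q))"

definition mono_le :: "real \<times> nat \<Rightarrow> real \<times> nat \<Rightarrow> bool" where
  "mono_le m n \<longleftrightarrow> snd m < snd n \<or> (snd m = snd n \<and> fst m \<le> fst n)"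

end

(*
  If B covers A, the component A lies in the component B, so a shadow of A lies in a shadow of B,
  and every lattice vector stabilising the former stabilises the latter. Moreover all shadows of
  a component are translates of each other: the lattice translates of one shadow form an open and
  closed invariant part of the preimage of the component (cells are closed and locally finite),
  and its image would otherwise disconnect the component on the torus. Hence Lambda_A is a subgroup
  of Lambda_B, so dim Lambda_A <= dim Lambda_B, which compares the exponents of R. If the dimensions
  agree, a basis of Lambda_A arises from one of Lambda_B by a nonsingular integer matrix M, so their
  Gram determinants satisfy G_A = det(M)^2 G_B >= G_B, and the unit cell volumes compare accordingly.
*)

theory Submission
  imports Defs "Jordan_Normal_Form.Determinant"
begin

section \<open>Additive subgroups and integer spans\<close>

definition additive_subgroup :: "'a::ab_group_add set \<Rightarrow> bool" where
  "additive_subgroup H \<longleftrightarrow> 0 \<in> H \<and> (\<forall>x\<in>H. \<forall>y\<in>H. x + y \<in> H) \<and> (\<forall>x\<in>H. - x \<in> H)"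

lemma additive_subgroup_zero: "additive_subgroup H \<Longrightarrow> 0 \<in> H"
  by (simp add: additive_subgroup_def)

lemma additive_subgroup_add: "additive_subgroup H \<Longrightarrow> x \<in> H \<Longrightarrow> y \<in> H \<Longrightarrow> x + y \<in> H"
  by (simp add: additive_subgroup_def)

lemma additive_subgroup_minus: "additive_subgroup H \<Longrightarrow> x \<in> H \<Longrightarrow> - x \<in> H"
  by (simp add: additive_subgroup_def)

lemma additive_subgroup_diff: "additive_subgroup H \<Longrightarrow> x \<in> H \<Longrightarrow> y \<in> H \<Longrightarrow> x - y \<in> H"
  by (metis additive_subgroup_add additive_subgroup_minus diff_conv_add_uminus)

lemma additive_subgroup_Int:
  "additive_subgroup H \<Longrightarrow> additive_subgroup H' \<Longrightarrow> additive_subgroup (H \<inter> H')"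
  by (simp add: additive_subgroup_def)

lemma additive_subgroup_sum:
  "additive_subgroup H \<Longrightarrow> (\<And>i. i \<in> I \<Longrightarrow> f i \<in> H) \<Longrightarrow> sum f I \<in> H"
  by (induction I rule: infinite_finite_induct)
    (auto intro: additive_subgroup_zero additive_subgroup_add)

lemma additive_subgroup_of_int_mult:
  fixes x :: "'a::ring_1"
  assumes "additive_subgroup H" "x \<in> H"
  shows "of_int k * x \<in> H"
  by (induction k rule: int_induct[where k = 0])
    (use assms in \<open>auto simp: algebra_simps intro: additive_subgroup_zero
       additive_subgroup_add additive_subgroup_diff\<close>)

lemma additive_subgroup_scaleR_of_int:
  fixes x :: "'a::real_vector"
  assumes "additive_subgroup H" "x \<in> H"
  shows "of_int k *\<^sub>R x \<in> H"
  by (induction k rule: int_induct[where k = 0])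
    (use assms in \<open>auto simp: algebra_simps intro: additive_subgroup_zero
       additive_subgroup_add additive_subgroup_diff\<close>)

lemma int_additive_subgroup_cyclic:
  fixes D :: "int set"
  assumes D: "additive_subgroup D"
  shows "\<exists>d\<in>D. \<forall>k\<in>D. d dvd k"
proof (cases "D \<subseteq> {0}")
  case True
  then show ?thesis using additive_subgroup_zero[OF D] by auto
next
  case False
  then obtain k0 where k0: "k0 \<in> D" "k0 \<noteq> 0" by blast
  define P where "P n \<longleftrightarrow> 0 < n \<and> int n \<in> D" for n
  have "P (nat \<bar>k0\<bar>)"
    using k0 additive_subgroup_minus[OF D k0(1)] by (cases "k0 > 0") (auto simp: P_def)
  then have Pd: "P (LEAST n. P n)" and least: "\<And>n. P n \<Longrightarrow> (LEAST n. P n) \<le> n"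
    by (auto intro: LeastI Least_le)
  define d where "d = int (LEAST n. P n)"
  have "d dvd k" if "k \<in> D" for k
  proof -
    have "k mod d = k - of_int (k div d) * d" by (simp add: minus_div_mult_eq_mod)
    also have "\<dots> \<in> D"
      using Pd that by (intro additive_subgroup_diff additive_subgroup_of_int_mult D)
        (auto simp: P_def d_def)
    finally have "k mod d \<in> D" .
    moreover have "0 \<le> k mod d" "k mod d < d" using Pd by (auto simp: P_def d_def)
    moreover have "\<not> P (nat (k mod d))"
      using least[of "nat (k mod d)"] \<open>k mod d < d\<close> by (auto simp: d_def P_def)
    ultimately have "k mod d = 0" by (auto simp: P_def)
    then show ?thesis by (simp add: mod_eq_0_iff_dvd)
  qed
  moreover have "d \<in> D" using Pd by (simp add: P_def d_def)
  ultimately show ?thesis by blast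
qed

lemma int_span_memI: "v = (\<Sum>b\<in>B. of_int (c b) *\<^sub>R b) \<Longrightarrow> v \<in> int_span B"
  unfolding int_span_def by blast

lemma int_span_memE:
  assumes "v \<in> int_span B"
  obtains c where "v = (\<Sum>b\<in>B. of_int (c b) *\<^sub>R b)"
  using assms unfolding int_span_def by blast

lemma additive_subgroup_int_span: "additive_subgroup (int_span B)"
  unfolding additive_subgroup_def
proof (intro conjI ballI)
  show "0 \<in> int_span B" by (rule int_span_memI[where c = "\<lambda>_. 0"]) simp
next
  fix x y assume "x \<in> int_span B" "y \<in> int_span B"
  then obtain c c' where "x = (\<Sum>b\<in>B. of_int (c b) *\<^sub>R b)" "y = (\<Sum>b\<in>B. of_int (c' b) *\<^sub>R b)"
    by (metis int_span_memE)
  then show "x + y \<in> int_span B"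
    by (intro int_span_memI[where c = "\<lambda>b. c b + c' b"]) (simp add: sum.distrib scaleR_add_left)
next
  fix x assume "x \<in> int_span B"
  then obtain c where "x = (\<Sum>b\<in>B. of_int (c b) *\<^sub>R b)" by (auto elim: int_span_memE)
  then show "- x \<in> int_span B"
    by (intro int_span_memI[where c = "\<lambda>b. - c b"]) (simp add: sum_negf)
qed

lemma int_span_superset: "finite B \<Longrightarrow> B \<subseteq> int_span B"
proof
  fix b assume "finite B" "b \<in> B"
  then have "(\<Sum>x\<in>B. of_int (if x = b then 1 else 0) *\<^sub>R x) = (\<Sum>x\<in>B. if x = b then x else 0)"
    by (intro sum.cong) auto
  also have "\<dots> = b" using \<open>finite B\<close> \<open>b \<in> B\<close> by (simp add: sum.delta')
  finally show "b \<in> int_span B" by (intro int_span_memI) (rule sym)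
qed

lemma int_span_subset_span: "int_span B \<subseteq> span B"
proof
  fix v assume "v \<in> int_span B"
  then obtain c where "v = (\<Sum>b\<in>B. of_int (c b) *\<^sub>R b)" by (rule int_span_memE)
  then show "v \<in> span B" by (simp only:) (intro span_sum span_scale span_base)
qed

lemma int_span_empty: "int_span {} = {0}"
  unfolding int_span_def by simp

lemma int_span_insert:
  assumes "finite B" "b \<notin> B"
  shows "int_span (insert b B) = {of_int k *\<^sub>R b + w | k w. w \<in> int_span B}"
proof (intro equalityI subsetI)
  fix v assume "v \<in> int_span (insert b B)"
  then obtain c where "v = (\<Sum>x\<in>insert b B. of_int (c x) *\<^sub>R x)" by (auto elim: int_span_memE)
  then have "v = of_int (c b) *\<^sub>R b + (\<Sum>x\<in>B. of_int (c x) *\<^sub>R x)" using assms by simp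
  then show "v \<in> {of_int k *\<^sub>R b + w | k w. w \<in> int_span B}" by (blast intro: int_span_memI)
next
  fix v assume "v \<in> {of_int k *\<^sub>R b + w | k w. w \<in> int_span B}"
  then obtain k c where v: "v = of_int k *\<^sub>R b + (\<Sum>x\<in>B. of_int (c x) *\<^sub>R x)"
    by (auto elim: int_span_memE)
  have "(\<Sum>x\<in>B. of_int ((c(b := k)) x) *\<^sub>R x) = (\<Sum>x\<in>B. of_int (c x) *\<^sub>R x)"
    using assms(2) by (intro sum.cong) auto
  then have "v = (\<Sum>x\<in>insert b B. of_int ((c(b := k)) x) *\<^sub>R x)" using assms v by simp
  then show "v \<in> int_span (insert b B)" by (rule int_span_memI)
qed

lemma lattice_basis_additive_subgroup: "lattice_basis L B \<Longrightarrow> additive_subgroup L"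
  by (simp add: lattice_basis_def additive_subgroup_int_span)

lemma lattice_basis_dim:
  assumes "lattice_basis H C"
  shows "dim H = card C"
proof -
  have "finite C" "independent C" and HC: "H = int_span C"
    using assms by (auto simp: lattice_basis_def)
  have "C \<subseteq> H" using int_span_superset[OF \<open>finite C\<close>] HC by simp
  moreover have "H \<subseteq> span C" using HC int_span_subset_span by simp
  ultimately have "span H = span C" unfolding span_eq using span_superset by blast
  then have "dim H = dim C" by (metis dim_span)
  then show ?thesis using \<open>independent C\<close> by (simp add: dim_eq_card_independent)
qed

lemma scaleR_add_notin_span:
  assumes "b \<notin> span S" "c \<noteq> 0" "w \<in> span S"
  shows "c *\<^sub>R b + w \<notin> span S"
proof
  assume "c *\<^sub>R b + w \<in> span S"
  then have "c *\<^sub>R b \<in> span S" using assms(3) span_add_eq2 by blast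
  then have "inverse c *\<^sub>R c *\<^sub>R b \<in> span S" by (rule span_scale)
  with assms(1,2) show False by simp
qed

lemma lattice_basis_insert:
  assumes C: "lattice_basis H C" and H: "H \<subseteq> span S" and h: "h \<notin> span S"
  shows "lattice_basis {of_int q *\<^sub>R h + w | q w. w \<in> H} (insert h C)"
proof -
  have "finite C" "independent C" and HC: "H = int_span C" using C by (auto simp: lattice_basis_def)
  have "h \<notin> span C"
    using h H HC int_span_superset[OF \<open>finite C\<close>] span_minimal[OF _ subspace_span, of C S] by auto
  then have "h \<notin> C" using span_base by blast
  have "int_span (insert h C) = {of_int q *\<^sub>R h + w | q w. w \<in> H}"
    using int_span_insert[OF \<open>finite C\<close> \<open>h \<notin> C\<close>] HC by simp
  with \<open>finite C\<close> \<open>independent C\<close> \<open>h \<notin> span C\<close> show ?thesis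
    unfolding lattice_basis_def by (simp add: independent_insert)
qed

lemma additive_subgroup_int_coefficients:
  fixes b :: "'a::real_vector"
  assumes H: "additive_subgroup H" and W: "additive_subgroup W"
  shows "additive_subgroup {k. \<exists>w\<in>W. of_int k *\<^sub>R b + w \<in> H}"
  unfolding additive_subgroup_def
proof (intro conjI ballI)
  show "0 \<in> {k. \<exists>w\<in>W. of_int k *\<^sub>R b + w \<in> H}"
    using additive_subgroup_zero[OF H] additive_subgroup_zero[OF W] by force
next
  fix k l assume "k \<in> {k. \<exists>w\<in>W. of_int k *\<^sub>R b + w \<in> H}" "l \<in> {k. \<exists>w\<in>W. of_int k *\<^sub>R b + w \<in> H}"
  then obtain w v where "w \<in> W" "of_int k *\<^sub>R b + w \<in> H" "v \<in> W" "of_int l *\<^sub>R b + v \<in> H"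
    by blast
  moreover have "of_int (k + l) *\<^sub>R b + (w + v) = (of_int k *\<^sub>R b + w) + (of_int l *\<^sub>R b + v)"
    by (simp add: algebra_simps)
  ultimately show "k + l \<in> {k. \<exists>w\<in>W. of_int k *\<^sub>R b + w \<in> H}"
    using additive_subgroup_add[OF H] additive_subgroup_add[OF W] by (metis (mono_tags) mem_Collect_eq)
next
  fix k assume "k \<in> {k. \<exists>w\<in>W. of_int k *\<^sub>R b + w \<in> H}"
  then obtain w where "w \<in> W" "of_int k *\<^sub>R b + w \<in> H" by blast
  moreover have "of_int (- k) *\<^sub>R b + (- w) = - (of_int k *\<^sub>R b + w)" by simp
  ultimately show "- k \<in> {k. \<exists>w\<in>W. of_int k *\<^sub>R b + w \<in> H}"
    using additive_subgroup_minus[OF H] additive_subgroup_minus[OF W] by (metis (mono_tags) mem_Collect_eq)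
qed

lemma additive_subgroup_eq_multiples_plus_Int:
  fixes b :: "'a::real_vector"
  assumes H: "additive_subgroup H" and W: "additive_subgroup W"
    and decomp: "\<And>v. v \<in> H \<Longrightarrow> \<exists>k. \<exists>w\<in>W. v = of_int k *\<^sub>R b + w"
    and dvd: "\<And>k w. w \<in> W \<Longrightarrow> of_int k *\<^sub>R b + w \<in> H \<Longrightarrow> d dvd k"
    and w0: "w0 \<in> W" "of_int d *\<^sub>R b + w0 \<in> H"
  shows "H = {of_int q *\<^sub>R (of_int d *\<^sub>R b + w0) + w | q w. w \<in> H \<inter> W}"
proof (intro equalityI subsetI)
  let ?h = "of_int d *\<^sub>R b + w0"
  fix v assume "v \<in> H"
  with decomp obtain k w where w: "w \<in> W" "v = of_int k *\<^sub>R b + w" by blast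
  with dvd \<open>v \<in> H\<close> obtain q where "k = q * d" by (metis dvd_def mult.commute)
  then have "v - of_int q *\<^sub>R ?h = w - of_int q *\<^sub>R w0"
    by (simp add: w(2) algebra_simps)
  moreover have "w - of_int q *\<^sub>R w0 \<in> W"
    using w(1) w0(1) W by (intro additive_subgroup_diff additive_subgroup_scaleR_of_int)
  moreover have "v - of_int q *\<^sub>R ?h \<in> H"
    using \<open>v \<in> H\<close> w0(2) H by (intro additive_subgroup_diff additive_subgroup_scaleR_of_int)
  ultimately have "v - of_int q *\<^sub>R ?h \<in> H \<inter> W" by simp
  then show "v \<in> {of_int q *\<^sub>R ?h + w | q w. w \<in> H \<inter> W}" by force
next
  fix v assume "v \<in> {of_int q *\<^sub>R (of_int d *\<^sub>R b + w0) + w | q w. w \<in> H \<inter> W}"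
  then show "v \<in> H" using w0(2) H
    by (auto intro!: additive_subgroup_add additive_subgroup_scaleR_of_int)
qed

text \<open>In the induction step the coefficients of the new basis vector \<open>b\<close> on \<open>H\<close> form a
  subgroup \<open>d\<int>\<close>, and \<open>H\<close> is generated by \<open>H \<inter> int_span B\<close> and one vector with coefficient \<open>d\<close>.\<close>

lemma subgroup_int_span_lattice_basis:
  fixes B :: "'a::euclidean_space set"
  assumes "finite B" "independent B" "additive_subgroup H" "H \<subseteq> int_span B"
  shows "\<exists>C. lattice_basis H C"
  using assms
proof (induction B arbitrary: H rule: finite_induct)
  case empty
  then have "H = {0}" using additive_subgroup_zero by (auto simp: int_span_empty)
  then have "lattice_basis H {}" by (simp add: lattice_basis_def int_span_empty independent_empty)
  then show ?case by blast
next
  case (insert b B)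
  have b: "b \<notin> span B" and indep: "independent B"
    using insert.prems(1) insert.hyps(2) by (auto simp: independent_insert)
  have decomp: "\<exists>k. \<exists>w\<in>int_span B. v = of_int k *\<^sub>R b + w" if "v \<in> H" for v
  proof -
    have "v \<in> int_span (insert b B)" using that insert.prems(3) by blast
    then show ?thesis unfolding int_span_insert[OF insert.hyps] by blast
  qed
  obtain d w0 where w0: "w0 \<in> int_span B" "of_int d *\<^sub>R b + w0 \<in> H"
    and dvd: "\<And>k w. w \<in> int_span B \<Longrightarrow> of_int k *\<^sub>R b + w \<in> H \<Longrightarrow> d dvd k"
    using int_additive_subgroup_cyclic[OF additive_subgroup_int_coefficients[OF
        insert.prems(2) additive_subgroup_int_span]] by blast
  have H_eq: "H = {of_int q *\<^sub>R (of_int d *\<^sub>R b + w0) + w | q w. w \<in> H \<inter> int_span B}"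
    using additive_subgroup_eq_multiples_plus_Int[OF insert.prems(2) additive_subgroup_int_span
        decomp dvd w0] .
  have "additive_subgroup (H \<inter> int_span B)"
    using insert.prems(2) additive_subgroup_int_span by (rule additive_subgroup_Int)
  then obtain C where C: "lattice_basis (H \<inter> int_span B) C"
    using insert.IH[OF indep] by blast
  show ?case
  proof (cases "d = 0")
    case True
    have "H \<subseteq> int_span B"
    proof
      fix v assume "v \<in> H"
      with decomp obtain k w where "w \<in> int_span B" "v = of_int k *\<^sub>R b + w" by blast
      with dvd[of w k] True \<open>v \<in> H\<close> show "v \<in> int_span B" by simp
    qed
    then show ?thesis using C by (metis inf.absorb1)
  next
    case False
    have "H \<inter> int_span B \<subseteq> span B" using int_span_subset_span by blast
    moreover have "of_int d *\<^sub>R b + w0 \<notin> span B"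
      using b False w0(1) int_span_subset_span by (intro scaleR_add_notin_span) auto
    ultimately have "lattice_basis {of_int q *\<^sub>R (of_int d *\<^sub>R b + w0) + w | q w. w \<in> H \<inter> int_span B}
        (insert (of_int d *\<^sub>R b + w0) C)"
      by (rule lattice_basis_insert[OF C])
    then show ?thesis unfolding H_eq[symmetric] by blast
  qed
qed

section \<open>Gram determinants\<close>

definition gram_mat :: "(nat \<Rightarrow> 'a::real_inner) \<Rightarrow> nat \<Rightarrow> real mat" where
  "gram_mat x n = mat n n (\<lambda>(i, j). x i \<bullet> x j)"

lemma gram_det_eq_det_gram_mat:
  assumes e: "bij_betw e {0..<n} B"
  shows "gram_det B = det (gram_mat e n)"
proof -
  define transfer where
    "transfer p = (\<lambda>x. if x \<in> B then e (p (inv_into {0..<n} e x)) else x)" for p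
  have e_inv: "inv_into {0..<n} e (e i) = i" "e i \<in> B" if i: "i < n" for i
    using e that by (auto simp: bij_betw_def)
  have "gram_det B = (\<Sum>p | p permutes {0..<n}.
      of_int (sign (transfer p)) * (\<Prod>b\<in>B. b \<bullet> transfer p b))"
    unfolding gram_det_def transfer_def
    by (rule sum.reindex_bij_betw[OF bij_betw_permutations[OF e], symmetric])
  also have "\<dots> = (\<Sum>p | p permutes {0..<n}. of_int (sign p) * (\<Prod>i = 0..<n. e i \<bullet> e (p i)))"
  proof (intro sum.cong refl)
    fix p assume "p \<in> {p. p permutes {0..<n}}"
    then interpret permutes_bij_finite p "{0..<n}" B e "inv_into {0..<n} e" "transfer p"
      using e by unfold_locales (auto simp: transfer_def bij_betw_def)
    have "(\<Prod>b\<in>B. b \<bullet> transfer p b) = (\<Prod>i = 0..<n. e i \<bullet> transfer p (e i))"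
      by (rule prod.reindex_bij_betw[OF e, symmetric])
    also have "\<dots> = (\<Prod>i = 0..<n. e i \<bullet> e (p i))"
      using e_inv by (intro prod.cong) (auto simp: transfer_def)
    finally show "of_int (sign (transfer p)) * (\<Prod>b\<in>B. b \<bullet> transfer p b)
        = of_int (sign p) * (\<Prod>i = 0..<n. e i \<bullet> e (p i))"
      using sign_p' by simp
  qed
  also have "\<dots> = det (gram_mat e n)"
    by (subst det_def'[of _ n]) (auto simp: gram_mat_def intro!: sum.cong prod.cong)
  finally show ?thesis .
qed

lemma gram_mat_change_basis:
  assumes "\<And>i. i < n \<Longrightarrow> x i = (\<Sum>k<n. c i k *\<^sub>R y k)"
  shows "gram_mat x n = mat n n (\<lambda>(i, k). c i k) * gram_mat y n * transpose_mat (mat n n (\<lambda>(i, k). c i k))"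
    (is "_ = ?rhs")
proof (rule eq_matI)
  fix i j assume "i < dim_row ?rhs" "j < dim_col ?rhs"
  then have ij: "i < n" "j < n" by auto
  have "x i \<bullet> x j = (\<Sum>l<n. (\<Sum>k<n. c i k * (y k \<bullet> y l)) * c j l)"
    unfolding assms[OF ij(1)] assms[OF ij(2)]
    by (simp add: inner_sum_left inner_sum_right sum_distrib_left sum_distrib_right mult_ac)
  then show "gram_mat x n $$ (i, j) = ?rhs $$ (i, j)"
    using ij by (simp add: gram_mat_def scalar_prod_def atLeast0LessThan)
qed (auto simp: gram_mat_def)

lemma det_gram_mat_change_basis:
  assumes "\<And>i. i < n \<Longrightarrow> x i = (\<Sum>k<n. c i k *\<^sub>R y k)"
  shows "det (gram_mat x n) = det (mat n n (\<lambda>(i, k). c i k))^2 * det (gram_mat y n)"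
proof -
  let ?M = "mat n n (\<lambda>(i, k). c i k)"
  have carrier: "?M \<in> carrier_mat n n" "gram_mat y n \<in> carrier_mat n n"
    by (auto simp: gram_mat_def)
  have "gram_mat x n = ?M * gram_mat y n * transpose_mat ?M"
    by (rule gram_mat_change_basis[OF assms])
  then have "det (gram_mat x n) = det (?M * gram_mat y n) * det (transpose_mat ?M)"
    using carrier by (simp add: det_mult[where n = n])
  also have "\<dots> = det ?M * det (gram_mat y n) * det ?M"
    using det_mult[OF carrier] det_transpose[OF carrier(1)] by simp
  finally show ?thesis by (simp add: power2_eq_square)
qed

lemma span_coefficients_enum:
  fixes f x :: "nat \<Rightarrow> 'a::real_vector"
  assumes f: "bij_betw f {0..<n} S" and x: "\<And>i. i < n \<Longrightarrow> x i \<in> span S"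
  obtains c where "\<And>i. i < n \<Longrightarrow> x i = (\<Sum>k<n. c i k *\<^sub>R f k)"
proof -
  have "finite S" using bij_betw_finite[OF f] by simp
  have "\<exists>c. x i = (\<Sum>k<n. c k *\<^sub>R f k)" if i: "i < n" for i
  proof -
    have "x i \<in> range (\<lambda>r. \<Sum>v\<in>S. r v *\<^sub>R v)"
      using x[OF i] by (simp add: span_finite[OF \<open>finite S\<close>])
    then obtain r where "x i = (\<Sum>v\<in>S. r v *\<^sub>R v)" by blast
    also have "\<dots> = (\<Sum>k\<in>{0..<n}. r (f k) *\<^sub>R f k)"
      by (rule sum.reindex_bij_betw[OF f, symmetric])
    finally show ?thesis by (auto simp: atLeast0LessThan)
  qed
  then show ?thesis using that by metis
qed

lemma int_span_coefficients_enum: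
  fixes f x :: "nat \<Rightarrow> 'a::euclidean_space"
  assumes f: "bij_betw f {0..<n} S" and x: "\<And>i. i < n \<Longrightarrow> x i \<in> int_span S"
  obtains c where "\<And>i. i < n \<Longrightarrow> x i = (\<Sum>k<n. of_int (c i k) *\<^sub>R f k)"
proof -
  have "\<exists>c. x i = (\<Sum>k<n. of_int (c k) *\<^sub>R f k)" if i: "i < n" for i
  proof -
    obtain r where "x i = (\<Sum>v\<in>S. of_int (r v) *\<^sub>R v)"
      using x[OF i] unfolding int_span_def by blast
    also have "\<dots> = (\<Sum>k\<in>{0..<n}. of_int (r (f k)) *\<^sub>R f k)"
      by (rule sum.reindex_bij_betw[OF f, symmetric])
    finally show ?thesis by (auto simp: atLeast0LessThan)
  qed
  then show ?thesis using that by metis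
qed

text \<open>Changing to an orthonormal basis of the span gives \<open>det(M)\<^sup>2 \<ge> 0\<close>; changing back shows
  that the determinant does not vanish.\<close>

lemma gram_det_pos:
  fixes C :: "'a::euclidean_space set"
  assumes C: "independent C"
  shows "0 < gram_det C"
proof -
  define n where "n = card C"
  obtain e where e: "bij_betw e {0..<n} C"
    using ex_bij_betw_nat_finite[OF finiteI_independent[OF C]] unfolding n_def by blast
  obtain U where U: "pairwise real_inner_class.orthogonal U" "\<And>x. x \<in> U \<Longrightarrow> norm x = 1"
    "independent U" "card U = dim (span C)" "span U = span C"
    using orthonormal_basis_subspace[OF subspace_span[of C]] by metis
  have "card U = n" using U(4) C by (simp add: n_def dim_eq_card_independent)
  then obtain f where f: "bij_betw f {0..<n} U"
    using ex_bij_betw_nat_finite[OF finiteI_independent[OF U(3)]] by blast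
  have "gram_mat f n = 1\<^sub>m n"
  proof (rule eq_matI)
    fix i j assume "i < dim_row (1\<^sub>m n)" "j < dim_col (1\<^sub>m n)"
    then have ij: "i < n" "j < n" "f i \<in> U" "f j \<in> U" using bij_betwE[OF f] by auto
    moreover have "f i \<noteq> f j" if "i \<noteq> j" using f ij that by (auto simp: bij_betw_def inj_on_def)
    ultimately show "gram_mat f n $$ (i, j) = 1\<^sub>m n $$ (i, j)"
      using U(1,2) by (auto simp: gram_mat_def norm_eq_1 pairwise_def real_inner_class.orthogonal_def)
  qed (auto simp: gram_mat_def)
  then have gram_f: "det (gram_mat f n) = 1" by simp
  have "e i \<in> span U" "f i \<in> span C" if i: "i < n" for i
    using that bij_betwE[OF e] bij_betwE[OF f] U(5) span_base by (metis atLeastLessThan_iff zero_le)+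
  obtain a where "\<And>i. i < n \<Longrightarrow> e i = (\<Sum>k<n. a i k *\<^sub>R f k)"
    using span_coefficients_enum[OF f] \<open>\<And>i. i < n \<Longrightarrow> e i \<in> span U\<close> by blast
  from det_gram_mat_change_basis[OF this] have "0 \<le> det (gram_mat e n)"
    using gram_f by simp
  moreover obtain b where "\<And>i. i < n \<Longrightarrow> f i = (\<Sum>k<n. b i k *\<^sub>R e k)"
    using span_coefficients_enum[OF e] \<open>\<And>i. i < n \<Longrightarrow> f i \<in> span C\<close> by blast
  from det_gram_mat_change_basis[OF this] have "det (gram_mat e n) \<noteq> 0"
    using gram_f by auto
  ultimately show ?thesis using gram_det_eq_det_gram_mat[OF e] by simp
qed

text \<open>The coordinate matrix of \<open>C1\<close> with respect to \<open>C2\<close> is integral and nonsingular, so its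
  determinant squared is at least 1.\<close>

lemma gram_det_antimono:
  fixes C1 C2 :: "'a::euclidean_space set"
  assumes C1: "lattice_basis H1 C1" and C2: "lattice_basis H2 C2"
    and "H1 \<subseteq> H2" and card: "card C1 = card C2"
  shows "gram_det C2 \<le> gram_det C1"
proof -
  have "finite C1" "independent C1" "finite C2" "independent C2" "H2 = int_span C2"
    using C1 C2 by (auto simp: lattice_basis_def)
  define n where "n = card C1"
  obtain e where e: "bij_betw e {0..<n} C1"
    using ex_bij_betw_nat_finite[OF \<open>finite C1\<close>] unfolding n_def by blast
  obtain f where f: "bij_betw f {0..<n} C2"
    using ex_bij_betw_nat_finite[OF \<open>finite C2\<close>] unfolding n_def card by blast
  have "C1 \<subseteq> H2"
    using int_span_superset[OF \<open>finite C1\<close>] \<open>H1 \<subseteq> H2\<close> C1 by (auto simp: lattice_basis_def)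
  then have "e i \<in> int_span C2" if i: "i < n" for i
    using bij_betwE[OF e] i \<open>H2 = int_span C2\<close> by auto
  then obtain c where c: "\<And>i. i < n \<Longrightarrow> e i = (\<Sum>k<n. of_int (c i k) *\<^sub>R f k)"
    using int_span_coefficients_enum[OF f] by blast
  define M where "M = mat n n (\<lambda>(i, k). c i k)"
  have "mat n n (\<lambda>(i, k). real_of_int (c i k)) = map_mat of_int M"
    by (auto simp: M_def)
  then have det_M: "det (mat n n (\<lambda>(i, k). real_of_int (c i k))) = of_int (det M)"
    by simp
  have gram: "gram_det C1 = of_int (det M)^2 * gram_det C2"
    using det_gram_mat_change_basis[OF c] gram_det_eq_det_gram_mat[OF e]
      gram_det_eq_det_gram_mat[OF f] det_M by simp
  then have "det M \<noteq> 0" using gram_det_pos[OF \<open>independent C1\<close>] by auto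
  then have "0 < (det M)^2" by simp
  then have "(1::real) \<le> of_int ((det M)^2)" by (simp only: of_int_1_le_iff)
  then have "(1::real) \<le> of_int (det M)^2" by simp
  moreover have "0 \<le> gram_det C2" using gram_det_pos[OF \<open>independent C2\<close>] by simp
  ultimately show ?thesis unfolding gram using mult_right_mono[of 1 _ "gram_det C2"] by simp
qed

lemma lat_vol_nonneg:
  assumes "\<exists>C. lattice_basis L C"
  shows "0 \<le> lat_vol L"
proof -
  have "lattice_basis L (SOME C. lattice_basis L C)" using assms by (rule someI_ex)
  then have "0 < gram_det (SOME C. lattice_basis L C)"
    by (intro gram_det_pos) (simp add: lattice_basis_def)
  then show ?thesis by (simp add: lat_vol_def)
qed

lemma lat_vol_antimono:
  assumes "\<exists>C. lattice_basis H1 C" "\<exists>C. lattice_basis H2 C" "H1 \<subseteq> H2" "dim H1 = dim H2"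
  shows "lat_vol H2 \<le> lat_vol H1"
proof -
  have C1: "lattice_basis H1 (SOME C. lattice_basis H1 C)"
    and C2: "lattice_basis H2 (SOME C. lattice_basis H2 C)"
    using assms(1,2) by (auto intro: someI_ex)
  have "card (SOME C. lattice_basis H1 C) = card (SOME C. lattice_basis H2 C)"
    using lattice_basis_dim[OF C1] lattice_basis_dim[OF C2] assms(4) by simp
  from gram_det_antimono[OF C1 C2 assms(3) this] show ?thesis
    by (simp add: lat_vol_def)
qed

section \<open>The torus\<close>

lemma tproj_eq_iff:
  assumes L: "additive_subgroup L"
  shows "tproj L x = tproj L y \<longleftrightarrow> y - x \<in> L"
proof
  assume "tproj L x = tproj L y"
  moreover have "y \<in> tproj L y"
    using additive_subgroup_zero[OF L] unfolding tproj_def by force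
  ultimately obtain u where "u \<in> L" "y = x + u" unfolding tproj_def by auto
  then show "y - x \<in> L" by simp
next
  assume d: "y - x \<in> L"
  have "x + u \<in> tproj L y" if "u \<in> L" for u
    using additive_subgroup_diff[OF L that d] unfolding tproj_def by (force simp: algebra_simps)
  moreover have "y + u \<in> tproj L x" if "u \<in> L" for u
    using additive_subgroup_add[OF L that d] unfolding tproj_def by (force simp: algebra_simps)
  ultimately show "tproj L x = tproj L y" unfolding tproj_def by blast
qed

lemma tproj_add: "additive_subgroup L \<Longrightarrow> u \<in> L \<Longrightarrow> tproj L (x + u) = tproj L x"
  using tproj_eq_iff[of L "x + u" x] additive_subgroup_minus[of L u] by simp

lemma tproj_vimage_image:
  assumes L: "additive_subgroup L"
  shows "tproj L -` tproj L ` W = (\<Union>u\<in>L. (\<lambda>x. x + u) ` W)"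
proof (intro equalityI subsetI)
  fix y assume "y \<in> tproj L -` tproj L ` W"
  then obtain w where "w \<in> W" "tproj L w = tproj L y" by auto
  then have "y - w \<in> L" "y = w + (y - w)" using tproj_eq_iff[OF L] by auto
  with \<open>w \<in> W\<close> show "y \<in> (\<Union>u\<in>L. (\<lambda>x. x + u) ` W)" by blast
qed (auto simp: tproj_add[OF L])

lemma openin_torus_top: "openin (torus_top L) U \<longleftrightarrow> U \<subseteq> range (tproj L) \<and> open (tproj L -` U)"
  unfolding torus_top_def by (subst topology_inverse'[OF istopology_torus]) simp

lemma topspace_torus_top: "topspace (torus_top L) = range (tproj L)"
proof (rule antisym)
  show "topspace (torus_top L) \<subseteq> range (tproj L)"
    using openin_torus_top[of L "topspace (torus_top L)"] by simp
  have "tproj L -` range (tproj L) = UNIV" by auto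
  then have "openin (torus_top L) (range (tproj L))" unfolding openin_torus_top by simp
  then show "range (tproj L) \<subseteq> topspace (torus_top L)" by (rule openin_subset)
qed

lemma continuous_map_tproj: "continuous_map euclidean (torus_top L) (tproj L)"
  unfolding continuous_map topspace_torus_top openin_torus_top by (auto simp: vimage_def)

lemma openin_torus_top_image:
  assumes "additive_subgroup L" "open W"
  shows "openin (torus_top L) (tproj L ` W)"
proof -
  have "open ((\<lambda>x. x + u) ` W)" for u
    using open_translation[OF assms(2), of u] by (simp add: add.commute)
  then show ?thesis unfolding openin_torus_top tproj_vimage_image[OF assms(1)] by auto
qed

section \<open>Shadows\<close>

lemma is_cell_connected_compact:
  assumes "is_cell s"
  shows "connected s" "compact s"
proof -
  obtain S :: "'a set" and h g where S: "subspace S" and "homeomorphism (cball 0 1 \<inter> S) s h g"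
    using assms unfolding is_cell_def cell_bd_def by blast
  then have "continuous_on (cball 0 1 \<inter> S) h" "h ` (cball 0 1 \<inter> S) = s"
    unfolding homeomorphism_def by auto
  moreover have "convex (cball (0::'a) 1 \<inter> S)"
    using S by (intro convex_Int convex_cball subspace_imp_convex)
  then have "connected (cball (0::'a) 1 \<inter> S)" by (rule convex_connected)
  moreover have "compact (cball (0::'a) 1 \<inter> S)"
    using S by (intro compact_Int_closed compact_cball closed_subspace)
  ultimately show "connected s" "compact s"
    by (metis connected_continuous_image compact_continuous_image)+
qed

lemma cell_complex_is_cell: "cell_complex K \<Longrightarrow> s \<in> K \<Longrightarrow> is_cell s"
  unfolding cell_complex_def by (erule conjE) (erule bspec)

lemma cell_complex_locally_finite: "cell_complex K \<Longrightarrow> \<exists>e>0. finite {s\<in>K. s \<inter> ball x e \<noteq> {}}"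
  unfolding cell_complex_def by (elim conjE) (erule spec)

lemma components_translation:
  fixes Q :: "'a::real_normed_vector set"
  assumes c: "c \<in> components Q" and Q: "\<And>x. x + u \<in> Q \<longleftrightarrow> x \<in> Q"
  shows "(\<lambda>x. x + u) ` c \<in> components Q"
proof -
  have "c \<subseteq> Q" "c \<noteq> {}" "connected c"
    using in_components_subset[OF c] in_components_nonempty[OF c] in_components_connected[OF c] .
  then have "connected ((\<lambda>x. x + u) ` c)" "(\<lambda>x. x + u) ` c \<subseteq> Q"
    using Q by (auto intro!: connected_continuous_image continuous_intros)
  then obtain c' where c': "c' \<in> components Q" "(\<lambda>x. x + u) ` c \<subseteq> c'"
    using exists_component_superset \<open>c \<noteq> {}\<close> \<open>c \<subseteq> Q\<close> by (metis subset_empty)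
  have "connected ((\<lambda>x. x - u) ` c')"
    using in_components_connected[OF c'(1)] by (intro connected_continuous_image continuous_intros)
  moreover have "(\<lambda>x. x - u) ` c' \<subseteq> Q"
    using in_components_subset[OF c'(1)] Q by (auto simp flip: Q[of "_ - u"])
  moreover have "c \<subseteq> (\<lambda>x. x - u) ` c'" using c'(2) by force
  ultimately have "(\<lambda>x. x - u) ` c' \<subseteq> c"
    using components_maximal[OF c] \<open>c \<noteq> {}\<close> by blast
  then have "c' \<subseteq> (\<lambda>x. x + u) ` c" by force
  with c' show ?thesis by (metis subset_antisym)
qed

lemma Diff_Union_components:
  assumes "\<C> \<subseteq> components Q"
  shows "Q - \<Union>\<C> = \<Union>(components Q - \<C>)"
proof (intro equalityI subsetI)
  fix x assume x: "x \<in> Q - \<Union>\<C>"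
  then have "connected_component_set Q x \<in> components Q - \<C>" "x \<in> connected_component_set Q x"
    by (auto intro: componentsI)
  then show "x \<in> \<Union>(components Q - \<C>)" by blast
next
  fix x assume "x \<in> \<Union>(components Q - \<C>)"
  then obtain c where c: "c \<in> components Q" "c \<notin> \<C>" "x \<in> c" by blast
  then have "x \<notin> c'" if "c' \<in> \<C>" for c'
    using components_eq[OF c(1)] assms that by blast
  with c show "x \<in> Q - \<Union>\<C>" using in_components_subset by blast
qed

text \<open>The members of \<open>S\<close> near \<open>x\<close> that miss \<open>x\<close> are finitely many closed sets, hence keep a
  positive distance from \<open>x\<close>; points of \<open>Q\<close> closer than that lie in a member through \<open>x\<close>.\<close>

lemma components_openin_locally_finite_union:
  fixes Q :: "'a::metric_space set"
  assumes locfin: "\<And>x. \<exists>e>0. finite {s\<in>S. s \<inter> ball x e \<noteq> {}}"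
    and closed: "\<And>s. s \<in> S \<Longrightarrow> closed s" and conn: "\<And>s. s \<in> S \<Longrightarrow> connected s"
    and cover: "Q \<subseteq> \<Union>S" and saturated: "\<And>s. s \<in> S \<Longrightarrow> s \<inter> Q \<noteq> {} \<Longrightarrow> s \<subseteq> Q"
    and c: "c \<in> components Q"
  shows "openin (top_of_set Q) c"
  unfolding openin_euclidean_subtopology_iff
proof (intro conjI ballI)
  show "c \<subseteq> Q" using c by (rule in_components_subset)
  fix x assume "x \<in> c"
  then have x: "x \<in> Q" using in_components_subset[OF c] by blast
  from c obtain x0 where "c = connected_component_set Q x0" by (auto simp: components_iff)
  with \<open>x \<in> c\<close> have c_eq: "c = connected_component_set Q x" using connected_component_eq by blast
  obtain e0 where "e0 > 0" and fin: "finite {s\<in>S. s \<inter> ball x e0 \<noteq> {}}"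
    using locfin by blast
  define E where "E = {s\<in>S. s \<inter> ball x e0 \<noteq> {} \<and> x \<notin> s}"
  have "finite E" using fin by (rule rev_finite_subset) (auto simp: E_def)
  then have "open (- \<Union>E)" using closed by (auto simp: E_def)
  moreover have "x \<in> - \<Union>E" by (auto simp: E_def)
  ultimately obtain e1 where "e1 > 0" and e1: "ball x e1 \<subseteq> - \<Union>E" by (rule openE)
  show "\<exists>e>0. \<forall>y\<in>Q. dist y x < e \<longrightarrow> y \<in> c"
  proof (intro exI[of _ "min e0 e1"] conjI ballI impI)
    show "0 < min e0 e1" using \<open>e0 > 0\<close> \<open>e1 > 0\<close> by simp
    fix y assume "y \<in> Q" "dist y x < min e0 e1"
    then obtain s where s: "s \<in> S" "y \<in> s" "y \<in> ball x e0" "y \<in> ball x e1"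
      using cover by (auto simp: dist_commute)
    then have "s \<notin> E" using e1 by blast
    with s have "x \<in> s" by (auto simp: E_def)
    then have "s \<subseteq> Q" using saturated[OF s(1)] x by blast
    then have "s \<subseteq> c"
      unfolding c_eq using \<open>x \<in> s\<close> conn[OF s(1)] connected_component_maximal by blast
    then show "y \<in> c" using s(2) by blast
  qed
qed

lemma invariant_clopen_in_connected_quotient:
  fixes Q :: "'a::euclidean_space set"
  assumes L: "additive_subgroup L"
    and Q_add: "\<And>x u. u \<in> L \<Longrightarrow> x + u \<in> Q \<longleftrightarrow> x \<in> Q"
    and H_add: "\<And>x u. x \<in> H \<Longrightarrow> u \<in> L \<Longrightarrow> x + u \<in> H"
    and "openin (top_of_set Q) H" "openin (top_of_set Q) (Q - H)"
    and conn: "connectedin (torus_top L) (tproj L ` Q)" and "H \<noteq> {}"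
  shows "H = Q"
proof -
  obtain W1 W2 where W: "open W1" "H = Q \<inter> W1" "open W2" "Q - H = Q \<inter> W2"
    using assms(4,5) unfolding openin_open by metis
  have Q_vimage: "tproj L -` tproj L ` Q = Q"
    using Q_add additive_subgroup_zero[OF L] unfolding tproj_vimage_image[OF L] by force
  have "tproj L ` Q \<subseteq> tproj L ` W1 \<union> tproj L ` W2" using W by blast
  moreover have "tproj L ` W1 \<inter> tproj L ` W2 \<inter> tproj L ` Q = {}"
  proof -
    have False if "w1 \<in> W1" "w2 \<in> W2" "tproj L w1 = tproj L w2" "tproj L w1 \<in> tproj L ` Q" for w1 w2
    proof -
      have "w1 \<in> Q" "w2 \<in> Q" using Q_vimage that by auto
      then have "w1 \<in> H" "w2 \<notin> H" using W that by auto
      moreover have "w2 - w1 \<in> L" using tproj_eq_iff[OF L] that(3) by blast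
      ultimately show False using H_add[of w1 "w2 - w1"] by simp
    qed
    then show ?thesis by blast
  qed
  moreover have "tproj L ` W1 \<inter> tproj L ` Q \<noteq> {}" using W \<open>H \<noteq> {}\<close> by blast
  ultimately have "tproj L ` W2 \<inter> tproj L ` Q = {}"
    using conn openin_torus_top_image[OF L \<open>open W1\<close>] openin_torus_top_image[OF L \<open>open W2\<close>]
    unfolding connectedin by blast
  then show "H = Q" using W by blast
qed

lemma components_translates_of_connected_image:
  fixes Q :: "'a::euclidean_space set"
  assumes L: "additive_subgroup L"
    and Q_add: "\<And>x u. u \<in> L \<Longrightarrow> x + u \<in> Q \<longleftrightarrow> x \<in> Q"
    and open_components: "\<And>c. c \<in> components Q \<Longrightarrow> openin (top_of_set Q) c"
    and conn: "connectedin (torus_top L) (tproj L ` Q)"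
    and h: "h \<in> components Q" and h': "h' \<in> components Q"
  shows "\<exists>u\<in>L. h' = (\<lambda>x. x + u) ` h"
proof -
  define \<C> where "\<C> = (\<lambda>u. (\<lambda>x. x + u) ` h) ` L"
  have \<C>: "\<C> \<subseteq> components Q"
    unfolding \<C>_def using components_translation[OF h] Q_add by blast
  have "\<Union>\<C> = Q"
  proof (rule invariant_clopen_in_connected_quotient[OF L Q_add _ _ _ conn])
    show "x + u \<in> \<Union>\<C>" if "x \<in> \<Union>\<C>" "u \<in> L" for x u
    proof -
      obtain v y where "v \<in> L" "y \<in> h" "x = y + v" using \<open>x \<in> \<Union>\<C>\<close> by (auto simp: \<C>_def)
      with additive_subgroup_add[OF L \<open>v \<in> L\<close> \<open>u \<in> L\<close>] show ?thesis
        unfolding \<C>_def by (force simp: add.assoc)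
    qed
    show "openin (top_of_set Q) (\<Union>\<C>)" using \<C> open_components by blast
    show "openin (top_of_set Q) (Q - \<Union>\<C>)"
      unfolding Diff_Union_components[OF \<C>] using open_components by blast
    have "h \<in> \<C>" using additive_subgroup_zero[OF L] by (force simp: \<C>_def)
    then show "\<Union>\<C> \<noteq> {}" using in_components_nonempty[OF h] by blast
  qed
  then have "h' \<in> \<C>"
    using Diff_Union_components[OF \<C>] h' in_components_nonempty[OF h'] by blast
  then show ?thesis by (auto simp: \<C>_def)
qed

lemma tproj_vimage_quot_sublevel:
  assumes L: "additive_subgroup L" and "periodic_complex K L" "periodic_filter K F L"
  shows "tproj L -` quot_sublevel K F L r = \<Union>{s\<in>K. F s \<le> r}"
proof -
  have "x + u \<in> \<Union>{s\<in>K. F s \<le> r}" if x: "x \<in> \<Union>{s\<in>K. F s \<le> r}" and "u \<in> L" for x u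
  proof -
    obtain s where "s \<in> K" "F s \<le> r" "x \<in> s" using x by blast
    with assms(2,3) \<open>u \<in> L\<close> show ?thesis
      unfolding periodic_complex_def periodic_filter_def by fastforce
  qed
  then show ?thesis
    unfolding quot_sublevel_def tproj_vimage_image[OF L]
    using additive_subgroup_zero[OF L] by (auto intro!: bexI[of _ 0]) blast
qed

lemma cell_subset_shadow_union:
  assumes "cell_complex K"
    and G: "G \<in> connected_components_of (subtopology (torus_top L) (quot_sublevel K F L r))"
    and s: "s \<in> K" "F s \<le> r" "s \<inter> tproj L -` G \<noteq> {}"
  shows "s \<subseteq> tproj L -` G"
proof -
  have "connected s" using cell_complex_is_cell[OF assms(1) s(1)] by (rule is_cell_connected_compact)
  then have "connectedin (torus_top L) (tproj L ` s)"
    by (intro connectedin_continuous_map_image[OF continuous_map_tproj]) simp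
  moreover have "tproj L ` s \<subseteq> quot_sublevel K F L r" using s by (auto simp: quot_sublevel_def)
  ultimately have "connectedin (subtopology (torus_top L) (quot_sublevel K F L r)) (tproj L ` s)"
    by (simp add: connectedin_subtopology)
  moreover have "\<not> disjnt G (tproj L ` s)" using s(3) by (auto simp: disjnt_def)
  ultimately show ?thesis using connected_components_of_maximal[OF G] by blast
qed

lemma shadows_translates:
  assumes L: "additive_subgroup L" and K: "cell_complex K"
    and "periodic_complex K L" "periodic_filter K F L"
    and G: "G \<in> connected_components_of (subtopology (torus_top L) (quot_sublevel K F L r))"
    and g: "g \<in> shadows L G" and g': "g' \<in> shadows L G"
  shows "\<exists>u\<in>L. g' = (\<lambda>x. x + u) ` g"
proof -
  define Q where "Q = tproj L -` G"
  have G_sub: "G \<subseteq> quot_sublevel K F L r \<inter> range (tproj L)"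
    using connected_components_of_subset[OF G] unfolding topspace_subtopology topspace_torus_top
    by blast
  have Q_add: "x + u \<in> Q \<longleftrightarrow> x \<in> Q" if u: "u \<in> L" for x u
    using tproj_add[OF L u, of x] unfolding Q_def by (simp only: vimage_eq)
  have "openin (top_of_set Q) c" if c: "c \<in> components Q" for c
  proof (rule components_openin_locally_finite_union[where S = "{s\<in>K. F s \<le> r}", OF _ _ _ _ _ c])
    fix x
    obtain e where "e > 0" "finite {s\<in>K. s \<inter> ball x e \<noteq> {}}"
      using cell_complex_locally_finite[OF K] by blast
    then show "\<exists>e>0. finite {s \<in> {s\<in>K. F s \<le> r}. s \<inter> ball x e \<noteq> {}}"
      by (auto elim!: rev_finite_subset)
  next
    fix s assume "s \<in> {s\<in>K. F s \<le> r}"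
    then have "is_cell s" using cell_complex_is_cell[OF K] by blast
    then show "closed s" "connected s"
      using is_cell_connected_compact compact_imp_closed by blast+
  next
    show "Q \<subseteq> \<Union>{s\<in>K. F s \<le> r}"
      using G_sub tproj_vimage_quot_sublevel[OF L assms(3,4)] unfolding Q_def by blast
  next
    fix s assume "s \<in> {s\<in>K. F s \<le> r}" "s \<inter> Q \<noteq> {}"
    then show "s \<subseteq> Q" using cell_subset_shadow_union[OF K G] unfolding Q_def by blast
  qed
  moreover have "tproj L ` Q = G" using G_sub unfolding Q_def by blast
  then have "connectedin (torus_top L) (tproj L ` Q)"
    using connectedin_connected_components_of[OF G] by (simp add: connectedin_subtopology)
  ultimately show ?thesis
    using components_translates_of_connected_image[OF L Q_add] g g'
    unfolding shadows_def Q_def by blast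
qed

lemma shadows_nonempty:
  assumes "G \<in> connected_components_of (subtopology (torus_top L) X)"
  shows "shadows L G \<noteq> {}"
proof -
  have "G \<noteq> {}" "G \<subseteq> range (tproj L)"
    using nonempty_connected_components_of[OF assms] connected_components_of_subset[OF assms]
    by (auto simp: topspace_torus_top)
  then show ?thesis unfolding shadows_def by auto
qed

section \<open>Periodicity lattices and frequencies\<close>

definition translation_stabilizer :: "'a::ab_group_add set \<Rightarrow> 'a set \<Rightarrow> 'a set" where
  "translation_stabilizer L g = {u\<in>L. (\<lambda>x. x + u) ` g = g}"

lemma additive_subgroup_translation_stabilizer:
  assumes L: "additive_subgroup L"
  shows "additive_subgroup (translation_stabilizer L g)"
  unfolding additive_subgroup_def translation_stabilizer_def
proof (intro conjI ballI)
  show "0 \<in> {u \<in> L. (\<lambda>x. x + u) ` g = g}" using additive_subgroup_zero[OF L] by simp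
next
  fix u v assume u: "u \<in> {u \<in> L. (\<lambda>x. x + u) ` g = g}" and v: "v \<in> {u \<in> L. (\<lambda>x. x + u) ` g = g}"
  have "(\<lambda>x. x + (u + v)) ` g = (\<lambda>x. x + u) ` ((\<lambda>x. x + v) ` g)"
    by (simp add: image_image algebra_simps)
  with u v additive_subgroup_add[OF L] show "u + v \<in> {u \<in> L. (\<lambda>x. x + u) ` g = g}" by auto
next
  fix u assume u: "u \<in> {u \<in> L. (\<lambda>x. x + u) ` g = g}"
  then have "(\<lambda>x. x + - u) ` g = (\<lambda>x. x + - u) ` ((\<lambda>x. x + u) ` g)" by simp
  also have "\<dots> = g" by (simp add: image_image)
  finally show "- u \<in> {u \<in> L. (\<lambda>x. x + u) ` g = g}" using u additive_subgroup_minus[OF L] by auto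
qed

lemma translation_stabilizer_translate:
  "translation_stabilizer L ((\<lambda>x. x + v) ` g) = translation_stabilizer L g"
proof -
  have "(\<lambda>x. x + u) ` ((\<lambda>x. x + v) ` g) = (\<lambda>x. x + v) ` ((\<lambda>x. x + u) ` g)" for u
    by (simp add: image_image algebra_simps)
  moreover have "inj (\<lambda>x. x + v)" by (simp add: inj_on_def)
  ultimately show ?thesis
    unfolding translation_stabilizer_def by (simp add: inj_image_eq_iff)
qed

lemma translation_stabilizer_mono_component:
  fixes Q :: "'a::real_normed_vector set"
  assumes Q: "\<And>x u. u \<in> L \<Longrightarrow> x + u \<in> Q \<longleftrightarrow> x \<in> Q"
    and h: "h \<in> components Q" and "g \<noteq> {}" "g \<subseteq> h"
  shows "translation_stabilizer L g \<subseteq> translation_stabilizer L h"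
proof
  fix u assume "u \<in> translation_stabilizer L g"
  then have u: "u \<in> L" "(\<lambda>x. x + u) ` g = g" by (auto simp: translation_stabilizer_def)
  have "(\<lambda>x. x + u) ` h \<in> components Q" using components_translation[OF h] Q[OF u(1)] by blast
  moreover have "(\<lambda>x. x + u) ` h \<inter> h \<noteq> {}"
    using u(2) \<open>g \<noteq> {}\<close> \<open>g \<subseteq> h\<close> by blast
  ultimately have "(\<lambda>x. x + u) ` h = h" using components_eq[OF _ h] by blast
  with u(1) show "u \<in> translation_stabilizer L h" by (simp add: translation_stabilizer_def)
qed

lemma per_lattice_eq_stabilizer_some:
  "per_lattice L G = translation_stabilizer L (SOME g. g \<in> shadows L G)"
  by (simp add: per_lattice_def translation_stabilizer_def Let_def)

lemma per_lattice_eq_translation_stabilizer: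
  assumes L: "additive_subgroup L" and "cell_complex K" "periodic_complex K L" "periodic_filter K F L"
    and G: "G \<in> connected_components_of (subtopology (torus_top L) (quot_sublevel K F L r))"
    and g: "g \<in> shadows L G"
  shows "per_lattice L G = translation_stabilizer L g"
proof -
  have "(SOME g. g \<in> shadows L G) \<in> shadows L G" using g by (rule someI)
  then obtain u where "g = (\<lambda>x. x + u) ` (SOME g. g \<in> shadows L G)"
    using shadows_translates[OF assms(1-5) _ g] by blast
  then show ?thesis by (simp add: per_lattice_eq_stabilizer_some translation_stabilizer_translate)
qed

lemma frequency_antimono:
  assumes "full_lattice L" and sub: "per_lattice L G1 \<subseteq> per_lattice L G2"
  shows "mono_le (frequency L G2) (frequency L G1)"
proof -
  obtain B where B: "lattice_basis L B" using assms(1) by (auto simp: full_lattice_def)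
  then have L: "additive_subgroup L" by (rule lattice_basis_additive_subgroup)
  have basis: "\<exists>C. lattice_basis (per_lattice L G) C" for G
  proof (rule subgroup_int_span_lattice_basis)
    show "finite B" "independent B" using B by (auto simp: lattice_basis_def)
    show "additive_subgroup (per_lattice L G)"
      unfolding per_lattice_eq_stabilizer_some using L by (rule additive_subgroup_translation_stabilizer)
    show "per_lattice L G \<subseteq> int_span B"
      using B by (auto simp: per_lattice_def lattice_basis_def Let_def)
  qed
  have "dim (per_lattice L G1) \<le> dim (per_lattice L G2)" using sub by (rule dim_subset)
  moreover have "dim (per_lattice L G2) \<le> DIM('a)" by (rule dim_subset_UNIV)
  ultimately show ?thesis
  proof (cases "dim (per_lattice L G1) = dim (per_lattice L G2)")
    case True
    let ?q = "real (DIM('a) - dim (per_lattice L G1))"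
    have "lat_vol (per_lattice L G2) / lat_vol L * unit_ball_vol ?q
        \<le> lat_vol (per_lattice L G1) / lat_vol L * unit_ball_vol ?q"
      using lat_vol_antimono[OF basis basis sub True] lat_vol_nonneg[OF exI, OF B]
      by (intro mult_right_mono divide_right_mono) auto
    with True show ?thesis unfolding mono_le_def frequency_def Let_def by simp
  qed (auto simp: mono_le_def frequency_def Let_def)
qed

theorem mainTheorem7:
  fixes L :: "'a::euclidean_space set"
    and K :: "'a set set"
    and F :: "'a set \<Rightarrow> real"
    and A B :: "'a set set \<times> real"
  assumes "full_lattice L"
    and "cell_complex K"
    and "periodic_complex K L"
    and "monotone_filter K F"
    and "periodic_filter K F L"
    and "mt_point K F L A"
    and "mt_point K F L B"
    and "covers B A"
  shows "mono_le (frequency L (fst B)) (frequency L (fst A))"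
proof -
  have L: "additive_subgroup L"
    using assms(1) lattice_basis_additive_subgroup by (auto simp: full_lattice_def)
  note setting = L assms(2,3,5)
  have GA: "fst A \<in> connected_components_of (subtopology (torus_top L) (quot_sublevel K F L (snd A)))"
    and GB: "fst B \<in> connected_components_of (subtopology (torus_top L) (quot_sublevel K F L (snd B)))"
    using assms(6,7) by (simp_all add: mt_point_def)
  obtain gA where gA: "gA \<in> shadows L (fst A)" using shadows_nonempty[OF GA] by blast
  then have "gA \<subseteq> tproj L -` fst B" "gA \<noteq> {}" "connected gA"
    using assms(8) in_components_subset in_components_nonempty in_components_connected
    by (fastforce simp: shadows_def covers_def)+
  then obtain h where h: "h \<in> shadows L (fst B)" "gA \<subseteq> h"
    unfolding shadows_def by (metis exists_component_superset subset_empty)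
  have "per_lattice L (fst A) = translation_stabilizer L gA"
    by (rule per_lattice_eq_translation_stabilizer[OF setting GA gA])
  also have "\<dots> \<subseteq> translation_stabilizer L h"
    using h \<open>gA \<noteq> {}\<close> tproj_add[OF L]
    by (intro translation_stabilizer_mono_component[of L "tproj L -` fst B"]) (auto simp: shadows_def)
  also have "\<dots> = per_lattice L (fst B)"
    by (rule per_lattice_eq_translation_stabilizer[OF setting GB h(1), symmetric])
  finally show ?thesis using frequency_antimono[OF assms(1)] by blast
qed

end
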